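(* In the Data Revocation Game, let $\mathcal I=\mathcal I_1\cup\mathcal I_2\cup\{k\}$ be a partition (disjoint union, $k\notin\mathcal I_1\cup\mathcal I_2$). Put $A_k=\xi_k\ell_k+\theta_k\sum_{i\in\mathcal I_1}\ell_i^2$ and $$\hat d_k=A_k^{-1}-\sum_{j\in\mathcal I_2}d_j^{\max}-\epsilon_k .$$ For $i\in\mathcal I_1$ put $B_i=\xi_i\ell_i+\theta_i\sum_{i'\in\mathcal I_1\setminus\{i\}}\ell_{i'}^2+\theta_i\big(1-\hat d_k/d_k^{\max}\big)\ell_k^2$, and for $j\in\mathcal I_2$ put $B_j=\xi_j\ell_j+\theta_j\sum_{i\in\mathcal I_1}\ell_i^2+\theta_j\big(1-\hat d_k/d_k^{\max}\big)\ell_k^2$. Suppose (a) $\epsilon_i\ge B_i^{-1}-A_k^{-1}+\epsilon_k$ for all $i\in\mathcal I_1$; (b) $\epsilon_j\le B_j^{-1}-A_k^{-1}+\epsilon_k$ for all $j\in\mathcal I_2$; (c) $A_k^{-1}-\sum_{j\in\mathcal I_2\cup\{k\}}d_j^{\max}<\epsilon_k<A_k^{-1}-\sum_{j\in\mathcal I_2}d_j^{\max}$. Then $\hat d_k\in(0,d_k^{\max})$ and the profile $d_i^*=0$ for $i\in\mathcal I_1$, $d_k^*=\hat d_k$, $d_j^*=d_j^{\max}$ for $j\in\mathcal I_2$ is a Nash equilibrium.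
   Context: Data Revocation Game: a finite set of users $\mathcal I=\{1,\dots,I\}$, $I\ge 2$. Each user $i$ has parameters $d_i^{\max}>0$, $\epsilon_i>0$, $\xi_i>0$, $\ell_i>0$, $\theta_i\ge 0$. Each user chooses $d_i\in[0,d_i^{\max}]$. Payoff $$U_i(d_i,\boldsymbol{d_{-i}})=\ln\Big(\sum_{j\in\mathcal I}d_j+\epsilon_i\Big)-\xi_i d_i\ell_i-\theta_i d_i\sum_{j\neq i}\Big(1-\frac{d_j}{d_j^{\max}}\Big)\ell_j^2 .$$ A Nash equilibrium is a profile $(d_i^* )$ with $d_i^*\in[0,d_i^{\max}]$ and $U_i(d_i^*,\boldsymbol{d_{-i}^*})\ge U_i(d_i,\boldsymbol{d_{-i}^*})$ for all $i$ and all $d_i\in[0,d_i^{\max}]$. *)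

theory Defs
  imports Complex_Main
begin

definition payoff ::
  "'u set \<Rightarrow> ('u \<Rightarrow> real) \<Rightarrow> ('u \<Rightarrow> real) \<Rightarrow> ('u \<Rightarrow> real) \<Rightarrow> ('u \<Rightarrow> real)
    \<Rightarrow> ('u \<Rightarrow> real) \<Rightarrow> ('u \<Rightarrow> real) \<Rightarrow> 'u \<Rightarrow> real" where
  "payoff I dmax eps xi l theta d i =
     ln ((\<Sum>j\<in>I. d j) + eps i) - xi i * d i * l i
     - theta i * d i * (\<Sum>j\<in>I - {i}. (1 - d j / dmax j) * (l j)\<^sup>2)"

definition nash_equilibrium ::
  "'u set \<Rightarrow> ('u \<Rightarrow> real) \<Rightarrow> ('u \<Rightarrow> real) \<Rightarrow> ('u \<Rightarrow> real) \<Rightarrow> ('u \<Rightarrow> real)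
    \<Rightarrow> ('u \<Rightarrow> real) \<Rightarrow> ('u \<Rightarrow> real) \<Rightarrow> bool" where
  "nash_equilibrium I dmax eps xi l theta d \<longleftrightarrow>
     (\<forall>i\<in>I. 0 \<le> d i \<and> d i \<le> dmax i \<and>
        (\<forall>x. 0 \<le> x \<and> x \<le> dmax i \<longrightarrow>
           payoff I dmax eps xi l theta (d(i := x)) i \<le> payoff I dmax eps xi l theta d i))"

end

theory Submission
  imports Defs
begin

text \<open>User \<open>i\<close>'s payoff is \<open>ln (S + x + \<epsilon>\<^sub>i) - c\<^sub>i x\<close> in its own strategy \<open>x\<close>, where
  the others' total \<open>S\<close> and the marginal cost \<open>c\<^sub>i\<close> do not depend on \<open>x\<close>. This is concave
  in \<open>x\<close>, so a profile is an equilibrium as soon as it satisfies the first-order conditions on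
  the box: \<open>1/(\<Sigma>d + \<epsilon>\<^sub>i) \<le> c\<^sub>i\<close> where \<open>d\<^sub>i\<close> can still increase and \<open>\<ge>\<close> where it can
  still decrease. For the proposed profile the total is \<open>1/A\<^sub>k - \<epsilon>\<^sub>k\<close> and the marginal
  costs are \<open>A\<^sub>k\<close> for \<open>k\<close> and \<open>B\<^sub>i\<close> for all other users, so the conditions are exactly
  the equality for \<open>k\<close> and hypotheses (a), (b); hypothesis (c) places \<open>d\<^sub>k\<close> inside
  \<open>(0, dmax k)\<close>.\<close>

definition marginal_cost ::
  "'u set \<Rightarrow> ('u \<Rightarrow> real) \<Rightarrow> ('u \<Rightarrow> real) \<Rightarrow> ('u \<Rightarrow> real) \<Rightarrow> ('u \<Rightarrow> real)
    \<Rightarrow> ('u \<Rightarrow> real) \<Rightarrow> 'u \<Rightarrow> real" where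
  "marginal_cost I dmax xi l theta d i =
     xi i * l i + theta i * (\<Sum>j\<in>I - {i}. (1 - d j / dmax j) * (l j)\<^sup>2)"

lemma payoff_fun_upd:
  assumes "finite I" "i \<in> I"
  shows "payoff I dmax eps xi l theta (d(i := x)) i =
     ln ((\<Sum>j\<in>I - {i}. d j) + x + eps i) - x * marginal_cost I dmax xi l theta d i"
proof -
  have "(\<Sum>j\<in>I. (d(i := x)) j) = (\<Sum>j\<in>I - {i}. d j) + x"
    using assms by (simp add: sum.remove)
  moreover have "(\<Sum>j\<in>I - {i}. (1 - (d(i := x)) j / dmax j) * (l j)\<^sup>2)
      = (\<Sum>j\<in>I - {i}. (1 - d j / dmax j) * (l j)\<^sup>2)"
    by (rule sum.cong) auto
  ultimately show ?thesis
    unfolding payoff_def marginal_cost_def by (simp add: algebra_simps)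
qed

lemma marginal_cost_pos:
  assumes "0 < xi i" "0 < l i" "0 \<le> theta i"
    and "\<forall>j\<in>I - {i}. 0 \<le> d j \<and> d j \<le> dmax j"
  shows "0 < marginal_cost I dmax xi l theta d i"
proof -
  have "0 \<le> (\<Sum>j\<in>I - {i}. (1 - d j / dmax j) * (l j)\<^sup>2)"
    using assms(4) by (intro sum_nonneg mult_nonneg_nonneg) (force simp: divide_le_eq_1)+
  with assms(1-3) show ?thesis
    unfolding marginal_cost_def by (simp add: add_pos_nonneg)
qed

text \<open>Concavity of \<open>ln\<close>: its tangent line at \<open>a + x\<^sub>0\<close> lies above it.\<close>

lemma ln_minus_linear_le_first_order:
  fixes a x x0 c :: real
  assumes "0 < a + x0" "0 < a + x" "(x - x0) * (1 / (a + x0) - c) \<le> 0"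
  shows "ln (a + x) - x * c \<le> ln (a + x0) - x0 * c"
proof -
  have "ln ((a + x) / (a + x0)) \<le> (a + x) / (a + x0) - 1"
    using assms by (intro ln_le_minus_one) simp
  hence "ln (a + x) - ln (a + x0) \<le> (x - x0) / (a + x0)"
    using assms by (simp add: ln_div field_simps)
  with assms(3) show ?thesis by (simp add: algebra_simps)
qed

lemma one_divide_le_swap:
  fixes b y :: real
  assumes "0 < b" "0 < y"
  shows "1 / y \<le> b \<longleftrightarrow> 1 / b \<le> y"
  using assms by (simp add: field_simps mult.commute)

lemma le_one_divide_swap:
  fixes b y :: real
  assumes "0 < b" "0 < y"
  shows "b \<le> 1 / y \<longleftrightarrow> y \<le> 1 / b"
  using assms by (simp add: field_simps mult.commute)

lemma nash_equilibrium_if_first_order: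
  assumes "finite I"
    and box: "\<forall>i\<in>I. 0 < eps i \<and> 0 \<le> d i \<and> d i \<le> dmax i"
    and cost_pos: "\<forall>i\<in>I. 0 < marginal_cost I dmax xi l theta d i"
    and lower: "\<forall>i\<in>I. d i < dmax i \<longrightarrow>
                  1 / marginal_cost I dmax xi l theta d i \<le> (\<Sum>j\<in>I. d j) + eps i"
    and upper: "\<forall>i\<in>I. 0 < d i \<longrightarrow>
                  (\<Sum>j\<in>I. d j) + eps i \<le> 1 / marginal_cost I dmax xi l theta d i"
  shows "nash_equilibrium I dmax eps xi l theta d"
  unfolding nash_equilibrium_def
proof (intro ballI conjI allI impI)
  fix i assume i: "i \<in> I"
  show "0 \<le> d i" "d i \<le> dmax i" using box i by auto
  fix x assume x: "0 \<le> x \<and> x \<le> dmax i"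
  define S where "S = (\<Sum>j\<in>I - {i}. d j)"
  define c where "c = marginal_cost I dmax xi l theta d i"
  have S_nonneg: "0 \<le> S"
    unfolding S_def using box by (intro sum_nonneg) auto
  have total: "(\<Sum>j\<in>I. d j) = S + d i"
    unfolding S_def using \<open>finite I\<close> i by (simp add: sum.remove)
  have c_pos: "0 < c" using cost_pos i unfolding c_def by blast
  have total_eps_pos: "0 < S + eps i + d i" using box i S_nonneg by (smt (verit))
  have "(x - d i) * (1 / (S + eps i + d i) - c) \<le> 0"
  proof (cases "x < d i")
    case True
    then have "c \<le> 1 / (S + eps i + d i)"
      using upper i x total le_one_divide_swap[OF c_pos total_eps_pos] unfolding c_def
      by (simp add: algebra_simps)
    with True show ?thesis by (intro mult_nonpos_nonneg) auto
  next
    case False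
    show ?thesis
    proof (cases "x = d i")
      case False
      with \<open>\<not> x < d i\<close> x have "d i < dmax i" by auto
      then have "1 / (S + eps i + d i) \<le> c"
        using lower i total one_divide_le_swap[OF c_pos total_eps_pos] unfolding c_def
        by (simp add: algebra_simps)
      with \<open>\<not> x < d i\<close> show ?thesis by (intro mult_nonneg_nonpos) auto
    qed simp
  qed
  then have "ln (S + eps i + x) - x * c \<le> ln (S + eps i + d i) - d i * c"
    using box i x S_nonneg by (intro ln_minus_linear_le_first_order) auto
  then show "payoff I dmax eps xi l theta (d(i := x)) i \<le> payoff I dmax eps xi l theta d i"
    using payoff_fun_upd[OF \<open>finite I\<close> i, of dmax eps xi l theta d x]
      payoff_fun_upd[OF \<open>finite I\<close> i, of dmax eps xi l theta d "d i"]
    unfolding S_def c_def by (simp add: algebra_simps)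
qed

definition revocation_profile :: "'u set \<Rightarrow> 'u \<Rightarrow> real \<Rightarrow> ('u \<Rightarrow> real) \<Rightarrow> 'u \<Rightarrow> real" where
  "revocation_profile I1 k h dmax i = (if i \<in> I1 then 0 else if i = k then h else dmax i)"

lemma sum_revocation_profile:
  assumes "finite I1" "finite I2" "I1 \<inter> I2 = {}" "k \<notin> I1" "k \<notin> I2"
  shows "(\<Sum>j\<in>I1 \<union> I2 \<union> {k}. revocation_profile I1 k h dmax j) = (\<Sum>j\<in>I2. dmax j) + h"
proof -
  have "(\<Sum>j\<in>I1 \<union> I2 \<union> {k}. revocation_profile I1 k h dmax j)
      = (\<Sum>j\<in>I1. revocation_profile I1 k h dmax j) + (\<Sum>j\<in>I2. revocation_profile I1 k h dmax j)
        + revocation_profile I1 k h dmax k"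
    using assms by (simp add: sum.union_disjoint)
  also have "(\<Sum>j\<in>I2. revocation_profile I1 k h dmax j) = (\<Sum>j\<in>I2. dmax j)"
    using assms by (intro sum.cong) (auto simp: revocation_profile_def)
  finally show ?thesis
    using assms by (simp add: revocation_profile_def)
qed

lemma marginal_cost_revocation_profile:
  assumes "finite I1" "finite I2" "I1 \<inter> I2 = {}" "k \<notin> I1" "k \<notin> I2"
    and "\<forall>j\<in>I2. dmax j \<noteq> 0"
  shows "marginal_cost (I1 \<union> I2 \<union> {k}) dmax xi l theta (revocation_profile I1 k h dmax) i
       = xi i * l i + theta i * (\<Sum>j\<in>I1 - {i}. (l j)\<^sup>2)
         + (if i = k then 0 else theta i * (1 - h / dmax k) * (l k)\<^sup>2)"
proof -
  define f where "f j = (1 - revocation_profile I1 k h dmax j / dmax j) * (l j)\<^sup>2" for j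
  have split: "(I1 \<union> I2 \<union> {k}) - {i} = (I1 - {i}) \<union> (I2 - {i}) \<union> ({k} - {i})" by auto
  have "(\<Sum>j\<in>(I1 \<union> I2 \<union> {k}) - {i}. f j)
      = (\<Sum>j\<in>I1 - {i}. f j) + (\<Sum>j\<in>I2 - {i}. f j) + (\<Sum>j\<in>{k} - {i}. f j)"
    unfolding split using assms by (subst sum.union_disjoint; auto)+
  also have "(\<Sum>j\<in>I1 - {i}. f j) = (\<Sum>j\<in>I1 - {i}. (l j)\<^sup>2)"
    by (intro sum.cong) (auto simp: f_def revocation_profile_def)
  also have "(\<Sum>j\<in>I2 - {i}. f j) = 0"
    using assms by (intro sum.neutral) (auto simp: f_def revocation_profile_def)
  also have "(\<Sum>j\<in>{k} - {i}. f j) = (if i = k then 0 else (1 - h / dmax k) * (l k)\<^sup>2)"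
    using assms by (auto simp: f_def revocation_profile_def)
  finally show ?thesis
    unfolding marginal_cost_def f_def by (simp add: algebra_simps)
qed

theorem proposition3:
  fixes I I1 I2 :: "'u set" and k :: 'u
    and dmax eps xi l theta :: "'u \<Rightarrow> real"
    and A hatd :: real and B :: "'u \<Rightarrow> real"
  assumes finI: "finite I" and cardI: "card I \<ge> 2"
    and pos: "\<forall>i\<in>I. dmax i > 0 \<and> eps i > 0 \<and> xi i > 0 \<and> l i > 0 \<and> theta i \<ge> 0"
    and part: "I = I1 \<union> I2 \<union> {k}" "I1 \<inter> I2 = {}" "k \<notin> I1" "k \<notin> I2"
    and A_def: "A = xi k * l k + theta k * (\<Sum>i\<in>I1. (l i)\<^sup>2)"
    and hatd_def: "hatd = 1 / A - (\<Sum>j\<in>I2. dmax j) - eps k"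
    and B1_def: "\<forall>i\<in>I1. B i = xi i * l i + theta i * (\<Sum>i'\<in>I1 - {i}. (l i')\<^sup>2)
                              + theta i * (1 - hatd / dmax k) * (l k)\<^sup>2"
    and B2_def: "\<forall>j\<in>I2. B j = xi j * l j + theta j * (\<Sum>i\<in>I1. (l i)\<^sup>2)
                              + theta j * (1 - hatd / dmax k) * (l k)\<^sup>2"
    and a: "\<forall>i\<in>I1. eps i \<ge> 1 / B i - 1 / A + eps k"
    and b: "\<forall>j\<in>I2. eps j \<le> 1 / B j - 1 / A + eps k"
    and c: "1 / A - (\<Sum>j\<in>I2 \<union> {k}. dmax j) < eps k" "eps k < 1 / A - (\<Sum>j\<in>I2. dmax j)"
  shows "0 < hatd \<and> hatd < dmax k \<and>
         nash_equilibrium I dmax eps xi l theta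
           (\<lambda>i. if i \<in> I1 then 0 else if i = k then hatd else dmax i)"
proof -
  have fin: "finite I1" "finite I2" using finI part(1) by auto
  have hatd_pos: "0 < hatd" using c(2) hatd_def by simp
  have hatd_lt: "hatd < dmax k" using c(1) hatd_def fin(2) part(4) by simp
  define d where "d = revocation_profile I1 k hatd dmax"
  have box: "\<forall>i\<in>I. 0 < eps i \<and> 0 \<le> d i \<and> d i \<le> dmax i"
    using pos hatd_pos hatd_lt by (auto simp: d_def revocation_profile_def)
  have total: "(\<Sum>j\<in>I. d j) = 1 / A - eps k"
    unfolding d_def part(1) using sum_revocation_profile[OF fin part(2-4)] hatd_def by simp
  have "\<forall>j\<in>I2. dmax j \<noteq> 0" using pos unfolding part(1) by force
  then have cost: "marginal_cost I dmax xi l theta d i = (if i = k then A else B i)"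
    if "i \<in> I" for i
    using marginal_cost_revocation_profile[OF fin part(2-4), of dmax xi l theta hatd i]
      that part A_def B1_def B2_def unfolding d_def
    by (cases "i \<in> I1") (auto simp: algebra_simps)
  have "nash_equilibrium I dmax eps xi l theta d"
  proof (rule nash_equilibrium_if_first_order[OF finI box])
    show "\<forall>i\<in>I. 0 < marginal_cost I dmax xi l theta d i"
      using pos box by (auto intro: marginal_cost_pos)
    show "\<forall>i\<in>I. d i < dmax i \<longrightarrow> 1 / marginal_cost I dmax xi l theta d i \<le> (\<Sum>j\<in>I. d j) + eps i"
      using a cost total part by (auto simp: d_def revocation_profile_def)
    show "\<forall>i\<in>I. 0 < d i \<longrightarrow> (\<Sum>j\<in>I. d j) + eps i \<le> 1 / marginal_cost I dmax xi l theta d i"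
      using b cost total part by (auto simp: d_def revocation_profile_def)
  qed
  then show ?thesis
    using hatd_pos hatd_lt by (simp add: d_def revocation_profile_def[abs_def])
qed

end
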